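(* Let $q=4$ and let $k\ge 1$ be an integer. Let $S_{2k}=x+x^{4}+x^{4^2}+\cdots+x^{4^{2k-1}}\in\mathbb{F}_2[x]$. Then the polynomial \[ g(x)=x+S_{2k}(x)^{q^{2k}}+S_{2k}(x)^{q^k+3} \] is a permutation polynomial of $\mathbb{F}_{q^{3k}}=\mathbb{F}_{4^{3k}}$, i.e. the map $x\mapsto g(x)$ is a bijection of $\mathbb{F}_{4^{3k}}$.
   Context: $\mathbb{F}_m$ denotes the finite field with $m$ elements. A polynomial $f\in\mathbb{F}_m[x]$ is a permutation polynomial (PP) of $\mathbb{F}_m$ if the induced map $\mathbb{F}_m\to\mathbb{F}_m$, $x\mapsto f(x)$, is a bijection. *)

theory Defs
  imports Main
begin

definition S :: "nat \<Rightarrow> 'a::comm_ring_1 \<Rightarrow> 'a" where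
  "S n x = (\<Sum>i<n. x ^ (4 ^ i))"

end

theory Submission
  imports Defs "HOL-Number_Theory.Residues"
begin

text \<open>Write \<open>Q = 4^k\<close> and \<open>\<sigma> z = z^Q\<close>, an automorphism of order 3 of the field with
  \<open>Q^3\<close> elements, and \<open>y = S\<^sub>2\<^sub>k(x)\<close>. Then \<open>y = A + \<sigma> A\<close> with \<open>A = S\<^sub>k(x)\<close>, so in
  characteristic 2 the trace \<open>y + \<sigma> y + \<sigma>\<^sup>2 y\<close> vanishes, and \<open>y\<^sup>4 + y = x + \<sigma>\<^sup>2 x\<close>. With
  these two relations the value \<open>g(x) = x + \<sigma>\<^sup>2 y + \<sigma> y \<cdot> y\<^sup>3\<close> satisfies
  \<open>g(x) + \<sigma>\<^sup>2 g(x) = y \<cdot> (\<sigma> y)\<^sup>2 \<cdot> \<sigma>\<^sup>2 y\<close>. The right-hand side is an injective function of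
  \<open>y\<close>, so \<open>g(x)\<close> determines \<open>y\<close>, and then \<open>x = g(x) - \<sigma>\<^sup>2 y - \<sigma> y \<cdot> y\<^sup>3\<close>.\<close>

lemma CHAR_eq_2_if_card_eq_power_2:
  assumes "card (UNIV :: 'a::{idom,finite} set) = 2 ^ n"
  shows "CHAR('a) = 2"
proof -
  have prime: "prime CHAR('a)"
    by (rule prime_CHAR_semidom) (simp add: finite_imp_CHAR_pos)
  moreover have "CHAR('a) dvd 2 ^ n"
    using CHAR_dvd_CARD[where 'a = 'a] unfolding assms .
  ultimately have "CHAR('a) dvd 2"
    by (rule prime_dvd_power_nat)
  with prime two_is_prime_nat show ?thesis
    by (rule primes_dvd_imp_eq)
qed

lemma power_card_UNIV_eq_self:
  fixes x :: "'a::{field,finite}"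
  shows "x ^ card (UNIV :: 'a set) = x"
proof (cases "x = 0")
  case True
  then show ?thesis by (simp add: finite_UNIV_card_ge_0)
next
  case False
  let ?U = "UNIV - {0::'a}"
  have "x ^ card ?U * \<Prod> ?U = 1 * \<Prod> ?U"
  proof -
    have "x ^ card ?U * \<Prod> ?U = (\<Prod>y\<in>?U. x * y)"
      by (simp add: prod.distrib)
    also have "\<dots> = \<Prod> ?U"
      by (rule prod.reindex_bij_witness[of _ "\<lambda>y. y / x" "\<lambda>y. x * y"]) (use False in auto)
    finally show ?thesis by simp
  qed
  then have "x ^ card ?U = 1"
    by (rule mult_right_cancel[THEN iffD1, rotated]) simp
  moreover have "card (UNIV :: 'a set) = Suc (card ?U)"
    by (rule card_Suc_Diff1[symmetric]) simp_all
  ultimately show ?thesis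
    by (simp only: power_Suc mult.right_neutral)
qed

lemma power_4_eq_1_imp_eq_1_CHAR_2:
  fixes l :: "'a::field"
  assumes "CHAR('a) = 2" and "l ^ 4 = 1"
  shows "l = 1"
proof -
  have "(l + 1) ^ 4 = l ^ 4 + 1 ^ 4"
    by (rule freshmans_dream'[where n = 2]) (simp_all add: assms)
  also have "\<dots> = 0"
    using assms of_nat_CHAR[where 'a = 'a] by simp
  finally have "l = - 1"
    by (simp add: eq_neg_iff_add_eq_0)
  then show ?thesis
    using uminus_CHAR_2[OF assms(1)] by metis
qed

lemma S_power_4_power:
  fixes x :: "'a::comm_ring_1"
  assumes "CHAR('a) = 2"
  shows "S n x ^ 4 ^ m = S n (x ^ 4 ^ m)"
proof -
  have "S n x ^ 4 ^ m = (\<Sum>i<n. (x ^ 4 ^ i) ^ 4 ^ m)"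
    unfolding S_def by (rule freshmans_dream_sum'[where n = "2 * m"]) (simp_all add: assms power_mult)
  also have "\<dots> = S n (x ^ 4 ^ m)"
    unfolding S_def by (simp add: mult.commute flip: power_mult)
  finally show ?thesis .
qed

lemma S_add: "S (m + n) x = S m x + S n (x ^ 4 ^ m)"
  by (induction n) (simp_all add: S_def add.assoc power_mult power_add)

lemma S_power_4_add:
  fixes x :: "'a::comm_ring_1"
  assumes "CHAR('a) = 2"
  shows "S n x ^ 4 + x = S n x + x ^ 4 ^ n"
  using S_add[of 1 n x] S_add[of n 1 x] S_power_4_power[OF assms, of n x 1]
  by (simp add: S_def add.commute)

locale char2_cubic_automorphism =
  fixes \<sigma> :: "'a::field \<Rightarrow> 'a"
  assumes CHAR_2: "CHAR('a) = 2"
    and add: "\<sigma> (a + b) = \<sigma> a + \<sigma> b"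
    and mult: "\<sigma> (a * b) = \<sigma> a * \<sigma> b"
    and cube: "\<sigma> (\<sigma> (\<sigma> a)) = a"
begin

lemma two_eq_0: "(2::'a) = 0"
  using of_nat_CHAR[where 'a = 'a] CHAR_2 by simp

lemma zero [simp]: "\<sigma> 0 = 0"
  using add[of 0 0] by (metis add.right_neutral add_left_cancel)

lemma eq_0_iff [simp]: "\<sigma> a = 0 \<longleftrightarrow> a = 0"
  by (metis cube zero)

lemma one [simp]: "\<sigma> 1 = 1"
  using mult[of 1 1] eq_0_iff[of 1] by (metis mult_cancel_left2 mult_1)

lemma power: "\<sigma> (a ^ n) = \<sigma> a ^ n"
  by (induction n) (simp_all add: mult)

definition trace :: "'a \<Rightarrow> 'a" where
  "trace a = a + \<sigma> a + \<sigma> (\<sigma> a)"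

definition twisted_norm :: "'a \<Rightarrow> 'a" where
  "twisted_norm a = a * \<sigma> a ^ 2 * \<sigma> (\<sigma> a)"

lemma trace_add_sigma: "trace (a + \<sigma> a) = 0"
proof -
  have "trace (a + \<sigma> a) = 2 * (a + \<sigma> a + \<sigma> (\<sigma> a))"
    by (simp add: trace_def add cube algebra_simps)
  then show ?thesis
    by (simp add: two_eq_0)
qed

lemma twisted_norm_eq_0_iff [simp]: "twisted_norm a = 0 \<longleftrightarrow> a = 0"
  by (simp add: twisted_norm_def)

lemma twisted_norm_mult_fixed:
  assumes "\<sigma> l = l"
  shows "twisted_norm (l * y) = l ^ 4 * twisted_norm y"
  unfolding twisted_norm_def using assms by (simp add: mult power2_eq_square power4_eq_xxxx)

text \<open>Multiplying the equation of norms crosswise with its \<open>\<sigma>\<^sup>2\<close>-image shows that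
  \<open>\<sigma> y / y = \<sigma> z / z\<close>, so the ratio \<open>l = z / y\<close> is fixed by \<open>\<sigma>\<close>; then the norms differ
  by the factor \<open>l\<^sup>4\<close>.\<close>

lemma inj_twisted_norm: "inj twisted_norm"
proof (rule injI)
  fix y z
  assume eq: "twisted_norm y = twisted_norm z"
  show "y = z"
  proof (cases "y = 0 \<or> z = 0")
    case True
    then show ?thesis
      using eq twisted_norm_eq_0_iff by metis
  next
    case False
    then have nz: "y \<noteq> 0" "z \<noteq> 0"
      by auto
    have eq2: "\<sigma> (\<sigma> y) * y ^ 2 * \<sigma> y = \<sigma> (\<sigma> z) * z ^ 2 * \<sigma> z"
      using arg_cong[OF eq, of "\<lambda>a. \<sigma> (\<sigma> a)"] by (simp add: twisted_norm_def mult power cube)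
    let ?c = "y * z * \<sigma> y * \<sigma> z * \<sigma> (\<sigma> y) * \<sigma> (\<sigma> z)"
    have "?c * (\<sigma> y * z) = twisted_norm y * (\<sigma> (\<sigma> z) * z ^ 2 * \<sigma> z)"
      by (simp add: twisted_norm_def power2_eq_square)
    also have "\<dots> = twisted_norm z * (\<sigma> (\<sigma> y) * y ^ 2 * \<sigma> y)"
      by (simp add: eq eq2)
    also have "\<dots> = ?c * (\<sigma> z * y)"
      by (simp add: twisted_norm_def power2_eq_square)
    finally have cross: "\<sigma> y * z = \<sigma> z * y"
      using nz by simp
    define l where "l = z / y"
    have z: "z = l * y"
      using nz by (simp add: l_def)
    have "\<sigma> l = l"
      using cross nz unfolding z mult by simp
    then have "l ^ 4 = 1"
      using eq nz twisted_norm_mult_fixed[of l y] unfolding z by simp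
    then have "l = 1"
      by (rule power_4_eq_1_imp_eq_1_CHAR_2[OF CHAR_2])
    then show ?thesis
      using z by simp
  qed
qed

lemma add_sigma2_eq_twisted_norm:
  assumes trace_0: "trace y = 0" and quartic: "y ^ 4 + x = y + \<sigma> (\<sigma> x)"
  defines "g \<equiv> x + \<sigma> (\<sigma> y) + \<sigma> y * y ^ 3"
  shows "g + \<sigma> (\<sigma> g) = twisted_norm y"
proof -
  have sigma2: "\<sigma> (\<sigma> y) = \<sigma> y + y"
    using trace_0 uminus_CHAR_2[OF CHAR_2] unfolding trace_def by (metis add.commute add_eq_0_iff)
  have sigma2x: "\<sigma> (\<sigma> x) = y ^ 4 + x - y"
    using quartic by (simp add: algebra_simps)
  have "g + \<sigma> (\<sigma> g) = x + \<sigma> (\<sigma> x) + \<sigma> (\<sigma> y) + \<sigma> y + \<sigma> y * y ^ 3 + y * \<sigma> (\<sigma> y) ^ 3"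
    by (simp add: g_def add mult power cube)
  also have "\<dots> = twisted_norm y + 2 * (x + \<sigma> y + y ^ 4 + 2 * \<sigma> y * y ^ 3 + \<sigma> y ^ 2 * y ^ 2)"
    unfolding twisted_norm_def sigma2 sigma2x
    by (simp add: algebra_simps power2_eq_square power3_eq_cube power4_eq_xxxx)
  finally show ?thesis
    by (simp add: two_eq_0)
qed

lemma inj_of_trace_eq_0:
  assumes trace_0: "\<And>x. trace (s x) = 0" and quartic: "\<And>x. s x ^ 4 + x = s x + \<sigma> (\<sigma> x)"
  shows "inj (\<lambda>x. x + \<sigma> (\<sigma> (s x)) + \<sigma> (s x) * s x ^ 3)"
proof (rule injI)
  fix x1 x2
  assume eq: "x1 + \<sigma> (\<sigma> (s x1)) + \<sigma> (s x1) * s x1 ^ 3 = x2 + \<sigma> (\<sigma> (s x2)) + \<sigma> (s x2) * s x2 ^ 3"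
  have "twisted_norm (s x1) = twisted_norm (s x2)"
    using add_sigma2_eq_twisted_norm[OF trace_0 quartic, of x1] add_sigma2_eq_twisted_norm[OF trace_0 quartic, of x2]
    by (simp only: eq)
  with inj_twisted_norm have "s x1 = s x2"
    by (rule injD)
  then show "x1 = x2"
    using eq by simp
qed

end

lemma char2_cubic_automorphism_power:
  fixes Q :: nat
  assumes "CHAR('a::{field,finite}) = 2" and "Q = 2 ^ e" and "card (UNIV :: 'a set) = Q ^ 3"
  shows "char2_cubic_automorphism (\<lambda>z::'a. z ^ Q)"
proof
  show "(a + b) ^ Q = a ^ Q + b ^ Q" for a b :: 'a
    by (rule freshmans_dream'[where n = e]) (simp_all add: assms(1,2))
  show "((a ^ Q) ^ Q) ^ Q = a" for a :: 'a
    using power_card_UNIV_eq_self[of a] by (simp add: assms(3) power3_eq_cube flip: power_mult)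
qed (simp_all add: assms(1) power_mult_distrib)

theorem theorem1p1:
  fixes k :: nat
    and g :: "'a::{field,finite} \<Rightarrow> 'a"
  assumes "k \<ge> 1"
    and "card (UNIV :: 'a set) = 4 ^ (3 * k)"
    and "g = (\<lambda>x. x + (S (2 * k) x) ^ (4 ^ (2 * k)) + (S (2 * k) x) ^ (4 ^ k + 3))"
  shows "bij g"
proof -
  define Q :: nat where "Q = 4 ^ k"
  have char: "CHAR('a) = 2"
    using assms(2) by (intro CHAR_eq_2_if_card_eq_power_2[where n = "6 * k"]) (simp add: power_mult)
  have "card (UNIV :: 'a set) = Q ^ 3"
    unfolding assms(2) Q_def power_mult[symmetric] by (simp add: mult.commute)
  then interpret char2_cubic_automorphism "\<lambda>z::'a. z ^ Q"
    by (intro char2_cubic_automorphism_power[OF char, where e = "2 * k"]) (simp_all add: Q_def power_mult)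
  have QQ: "4 ^ (2 * k) = Q * Q"
    by (simp add: Q_def mult_2 power_add)
  have "trace (S (2 * k) x) = 0" for x :: 'a
    using S_add[of k k x] S_power_4_power[OF char, of k x k] trace_add_sigma[of "S k x"]
    by (simp add: mult_2 flip: Q_def)
  moreover have "S (2 * k) x ^ 4 + x = S (2 * k) x + (x ^ Q) ^ Q" for x :: 'a
    using S_power_4_add[OF char, of "2 * k" x] unfolding QQ by (simp add: power_mult)
  ultimately have "inj (\<lambda>x::'a. x + (S (2 * k) x ^ Q) ^ Q + S (2 * k) x ^ Q * S (2 * k) x ^ 3)"
    by (rule inj_of_trace_eq_0)
  also have "(\<lambda>x::'a. x + (S (2 * k) x ^ Q) ^ Q + S (2 * k) x ^ Q * S (2 * k) x ^ 3) = g"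
    unfolding assms(3) QQ Q_def[symmetric] by (simp only: power_add power_mult)
  finally show ?thesis
    by (intro bijI finite_UNIV_inj_surj) simp_all
qed

end
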